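(* There do not exist closed (compact without boundary) translating solitons in $\mathbb{H}^2\times\mathbb{R}$.
   Context: $\mathbb{H}^2\times\mathbb{R}$ carries the product metric $\langle\cdot,\cdot\rangle$ of the hyperbolic plane of curvature $-1$ and the real line; $\partial_z$ is the unit vertical field. An oriented immersed surface $M$ with unit normal $\eta$ and mean curvature $H_M$ (half the trace of the second fundamental form with respect to $\eta$) is a translating soliton if $H_M=\langle\eta,\partial_z\rangle$ at every point. *)

theory Defs
  imports "HOL-Analysis.Analysis"
begin

text \<open>Model of H^2 x R: points (x,(y,z)) with y > 0; H^2 is the upper half-plane
  with metric (dx^2+dy^2)/y^2 (curvature -1), R carries dz^2.\<close>

type_synonym pt = "real \<times> real \<times> real"

definition cx :: "pt \<Rightarrow> real" where "cx P = fst P"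
definition cy :: "pt \<Rightarrow> real" where "cy P = fst (snd P)"
definition cz :: "pt \<Rightarrow> real" where "cz P = snd (snd P)"

definition in_H2R :: "pt \<Rightarrow> bool" where "in_H2R P \<longleftrightarrow> cy P > 0"

definition hmetric :: "pt \<Rightarrow> pt \<Rightarrow> pt \<Rightarrow> real" where
  "hmetric P V W = (cx V * cx W + cy V * cy W) / (cy P)^2 + cz V * cz W"

text \<open>Christoffel term Gamma(V,W) of the Levi-Civita connection at P:
  Gamma^x_{xy} = -1/y, Gamma^y_{xx} = 1/y, Gamma^y_{yy} = -1/y, all others 0.\<close>
definition chr :: "pt \<Rightarrow> pt \<Rightarrow> pt \<Rightarrow> pt" where
  "chr P V W = (- (cx V * cy W + cy V * cx W) / cy P,
                (cx V * cx W - cy V * cy W) / cy P, 0)"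

definition pdu :: "(real \<times> real \<Rightarrow> 'b::real_normed_vector) \<Rightarrow> real \<times> real \<Rightarrow> 'b" where
  "pdu f p = vector_derivative (\<lambda>t. f (t, snd p)) (at (fst p))"
definition pdv :: "(real \<times> real \<Rightarrow> 'b::real_normed_vector) \<Rightarrow> real \<times> real \<Rightarrow> 'b" where
  "pdv f p = vector_derivative (\<lambda>t. f (fst p, t)) (at (snd p))"

definition C1_on :: "(real \<times> real) set \<Rightarrow> (real \<times> real \<Rightarrow> 'b::real_normed_vector) \<Rightarrow> bool" where
  "C1_on U f \<longleftrightarrow>
     (\<forall>p\<in>U. ((\<lambda>t. f (t, snd p)) has_vector_derivative pdu f p) (at (fst p)) \<and>
            ((\<lambda>t. f (fst p, t)) has_vector_derivative pdv f p) (at (snd p))) \<and>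
     continuous_on U f \<and> continuous_on U (pdu f) \<and> continuous_on U (pdv f)"

definition C2_on :: "(real \<times> real) set \<Rightarrow> (real \<times> real \<Rightarrow> 'b::real_normed_vector) \<Rightarrow> bool" where
  "C2_on U f \<longleftrightarrow> C1_on U f \<and> C1_on U (pdu f) \<and> C1_on U (pdv f)"

definition immersive_at :: "(real \<times> real \<Rightarrow> pt) \<Rightarrow> real \<times> real \<Rightarrow> bool" where
  "immersive_at X p \<longleftrightarrow>
     (\<forall>a b. a *\<^sub>R pdu X p + b *\<^sub>R pdv X p = 0 \<longrightarrow> a = 0 \<and> b = 0)"

definition unit_normal_at :: "(real \<times> real \<Rightarrow> pt) \<Rightarrow> (real \<times> real \<Rightarrow> pt) \<Rightarrow> real \<times> real \<Rightarrow> bool" where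
  "unit_normal_at X N p \<longleftrightarrow>
     hmetric (X p) (N p) (pdu X p) = 0 \<and> hmetric (X p) (N p) (pdv X p) = 0 \<and>
     hmetric (X p) (N p) (N p) = 1"

text \<open>Mean curvature (half trace of the second fundamental form w.r.t. N) of the
  parametrised surface X at p: H = (g22 h11 - 2 g12 h12 + g11 h22) / (2 det g),
  with h_ij = < D_{d_i} X_j , N >.\<close>
definition mean_curv :: "(real \<times> real \<Rightarrow> pt) \<Rightarrow> (real \<times> real \<Rightarrow> pt) \<Rightarrow> real \<times> real \<Rightarrow> real" where
  "mean_curv X N p =
    (let P = X p; Xu = pdu X p; Xv = pdv X p;
         g11 = hmetric P Xu Xu; g12 = hmetric P Xu Xv; g22 = hmetric P Xv Xv;
         h11 = hmetric P (pdu (pdu X) p + chr P Xu Xu) (N p);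
         h12 = hmetric P (pdv (pdu X) p + chr P Xv Xu) (N p);
         h22 = hmetric P (pdv (pdv X) p + chr P Xv Xv) (N p)
     in (g22 * h11 - 2 * g12 * h12 + g11 * h22) / (2 * (g11 * g22 - g12^2)))"

text \<open>A closed (compact, without boundary, nonempty) oriented immersed surface:
  an abstract compact Hausdorff space M locally homeomorphic to open subsets of R^2
  via charts phi such that F o phi is a C^2 immersion into H^2 x R; eta is a
  continuous unit normal field along F; the translating soliton equation
  H = <eta, d_z> holds everywhere.\<close>
definition closed_translating_soliton :: "'a topology \<Rightarrow> ('a \<Rightarrow> pt) \<Rightarrow> ('a \<Rightarrow> pt) \<Rightarrow> bool" where
  "closed_translating_soliton M F eta \<longleftrightarrow>
     compact_space M \<and> Hausdorff_space M \<and> topspace M \<noteq> {} \<and>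
     continuous_map M euclidean F \<and> continuous_map M euclidean eta \<and>
     (\<forall>q\<in>topspace M. in_H2R (F q)) \<and>
     (\<forall>q\<in>topspace M. \<exists>U (phi :: real \<times> real \<Rightarrow> 'a).
        open U \<and> q \<in> phi ` U \<and> openin M (phi ` U) \<and>
        homeomorphic_map (subtopology euclidean U) (subtopology M (phi ` U)) phi \<and>
        C2_on U (F \<circ> phi) \<and>
        (\<forall>p\<in>U. immersive_at (F \<circ> phi) p \<and>
                unit_normal_at (F \<circ> phi) (eta \<circ> phi) p \<and>
                mean_curv (F \<circ> phi) (eta \<circ> phi) p = hmetric (F (phi p)) (eta (phi p)) (0, 0, 1)))"

end

theory Submission
  imports Defs
begin

(* At a highest point of the compact surface the height z is maximal in a chart, so its
   gradient vanishes and its Hessian is negative semidefinite there.  The tangent plane is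
   then horizontal, the unit normal is eps d_z with eps = +-1, and because the Christoffel
   symbols of H^2 x R have no vertical component the second fundamental form is
   eps Hess z.  Hence H = eps tr(g^-1 Hess z) / 2, while the soliton equation demands
   H = <eta, d_z> = eps, i.e. tr(g^-1 Hess z) = 2 > 0: impossible. *)

lemma Taylor2_between:
  fixes h h' h'' :: "real \<Rightarrow> real"
  assumes "\<And>y. \<bar>y - c\<bar> \<le> \<bar>x - c\<bar> \<Longrightarrow> (h has_real_derivative h' y) (at y)"
    and "\<And>y. \<bar>y - c\<bar> \<le> \<bar>x - c\<bar> \<Longrightarrow> (h' has_real_derivative h'' y) (at y)"
  shows "\<exists>\<xi>. \<bar>\<xi> - c\<bar> \<le> \<bar>x - c\<bar> \<and> h x = h c + h' c * (x - c) + h'' \<xi> / 2 * (x - c)^2"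
proof (cases "x = c")
  case True
  then show ?thesis by auto
next
  case False
  define diff where "diff = (\<lambda>m::nat. if m = 0 then h else if m = 1 then h' else h'')"
  have "\<exists>t. (if x < c then x < t \<and> t < c else c < t \<and> t < x) \<and>
    h x = (\<Sum>m<2. (diff m c / fact m) * (x - c)^m) + (diff 2 t / fact 2) * (x - c)^2"
  proof (rule Taylor[where a = "min x c" and b = "max x c"])
    show "\<forall>m t. m < 2 \<and> min x c \<le> t \<and> t \<le> max x c \<longrightarrow> DERIV (diff m) t :> diff (Suc m) t"
    proof (intro allI impI)
      fix m t assume "m < (2::nat) \<and> min x c \<le> t \<and> t \<le> max x c"
      moreover from this have "\<bar>t - c\<bar> \<le> \<bar>x - c\<bar>" by (auto simp: min_def max_def split: if_splits)
      ultimately show "DERIV (diff m) t :> diff (Suc m) t"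
        using assms by (auto simp: diff_def less_2_cases_iff)
    qed
  qed (use False in \<open>auto simp: diff_def\<close>)
  then obtain t where "if x < c then x < t \<and> t < c else c < t \<and> t < x"
    and "h x = (\<Sum>m<2. (diff m c / fact m) * (x - c)^m) + (diff 2 t / fact 2) * (x - c)^2"
    by blast
  then show ?thesis
    by (intro exI[of _ t]) (auto simp: diff_def numeral_2_eq_2 lessThan_Suc split: if_splits)
qed

lemma MVT_between:
  fixes h h' :: "real \<Rightarrow> real"
  assumes "\<And>y. \<bar>y - c\<bar> \<le> \<bar>x - c\<bar> \<Longrightarrow> (h has_real_derivative h' y) (at y)"
  shows "\<exists>\<xi>. \<bar>\<xi> - c\<bar> \<le> \<bar>x - c\<bar> \<and> h x = h c + h' \<xi> * (x - c)"
proof (cases x c rule: linorder_cases)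
  case less
  then obtain z where "x < z" "z < c" "h c - h x = (c - x) * h' z"
    using MVT2[of x c h h'] assms by force
  then show ?thesis by (intro exI[of _ z]) (auto simp: algebra_simps)
next
  case greater
  then obtain z where "c < z" "z < x" "h x - h c = (x - c) * h' z"
    using MVT2[of c x h h'] assms by force
  then show ?thesis by (intro exI[of _ z]) (auto simp: algebra_simps)
qed auto

lemma dist_Pair_le_add:
  fixes x a :: "'a::real_normed_vector" and y b :: "'b::real_normed_vector"
  shows "dist (x, y) (a, b) \<le> dist x a + dist y b"
  using norm_Pair_le[of "x - a" "y - b"] by (simp add: dist_norm)

lemma Pair_mem_cball_L1:
  fixes x y u0 v0 :: real
  assumes "\<bar>x - u0\<bar> + \<bar>y - v0\<bar> \<le> r"
  shows "(x, y) \<in> cball (u0, v0) r"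
  using dist_Pair_le_add[of u0 v0 x y] assms by (simp add: dist_real_def abs_minus_commute)

lemma second_order_expansion_L_path:
  fixes f fu fv fuu fuv fvv :: "real \<times> real \<Rightarrow> real"
  assumes sub: "cball (u0, v0) (\<bar>A\<bar> + \<bar>B\<bar>) \<subseteq> U"
    and fu: "\<forall>p\<in>U. ((\<lambda>t. f (t, snd p)) has_real_derivative fu p) (at (fst p))"
    and fv: "\<forall>p\<in>U. ((\<lambda>t. f (fst p, t)) has_real_derivative fv p) (at (snd p))"
    and fuu: "\<forall>p\<in>U. ((\<lambda>t. fu (t, snd p)) has_real_derivative fuu p) (at (fst p))"
    and fuv: "\<forall>p\<in>U. ((\<lambda>t. fu (fst p, t)) has_real_derivative fuv p) (at (snd p))"
    and fvv: "\<forall>p\<in>U. ((\<lambda>t. fv (fst p, t)) has_real_derivative fvv p) (at (snd p))"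
  obtains q1 q2 q3 where
    "q1 \<in> cball (u0, v0) (\<bar>A\<bar> + \<bar>B\<bar>)" "q2 \<in> cball (u0, v0) (\<bar>A\<bar> + \<bar>B\<bar>)"
    "q3 \<in> cball (u0, v0) (\<bar>A\<bar> + \<bar>B\<bar>)"
    "f (u0 + A, v0 + B) = f (u0, v0) + A * fu (u0, v0) + B * fv (u0, v0)
       + (A^2 * fuu q1 + 2 * A * B * fuv q2 + B^2 * fvv q3) / 2"
proof -
  have vertical: "(u0, y) \<in> U" if "\<bar>y - v0\<bar> \<le> \<bar>B\<bar>" for y
    using that sub Pair_mem_cball_L1[of u0 u0 y v0 "\<bar>A\<bar> + \<bar>B\<bar>"] by auto
  have horizontal: "(x, v0 + B) \<in> U" if "\<bar>x - u0\<bar> \<le> \<bar>A\<bar>" for x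
    using that sub Pair_mem_cball_L1[of x u0 "v0 + B" v0 "\<bar>A\<bar> + \<bar>B\<bar>"] by auto
  obtain \<xi>1 where \<xi>1: "\<bar>\<xi>1 - v0\<bar> \<le> \<bar>B\<bar>"
    and e1: "f (u0, v0 + B) = f (u0, v0) + fv (u0, v0) * B + fvv (u0, \<xi>1) / 2 * B^2"
    using Taylor2_between[of v0 "v0 + B" "\<lambda>s. f (u0, s)" "\<lambda>s. fv (u0, s)" "\<lambda>s. fvv (u0, s)"]
      vertical fv fvv by force
  obtain \<xi>2 where \<xi>2: "\<bar>\<xi>2 - u0\<bar> \<le> \<bar>A\<bar>"
    and e2: "f (u0 + A, v0 + B) = f (u0, v0 + B) + fu (u0, v0 + B) * A + fuu (\<xi>2, v0 + B) / 2 * A^2"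
    using Taylor2_between[of u0 "u0 + A" "\<lambda>s. f (s, v0 + B)" "\<lambda>s. fu (s, v0 + B)" "\<lambda>s. fuu (s, v0 + B)"]
      horizontal fu fuu by force
  obtain \<xi>3 where \<xi>3: "\<bar>\<xi>3 - v0\<bar> \<le> \<bar>B\<bar>"
    and e3: "fu (u0, v0 + B) = fu (u0, v0) + fuv (u0, \<xi>3) * B"
    using MVT_between[of v0 "v0 + B" "\<lambda>s. fu (u0, s)" "\<lambda>s. fuv (u0, s)"] vertical fuv by force
  show ?thesis
  proof (rule that[of "(\<xi>2, v0 + B)" "(u0, \<xi>3)" "(u0, \<xi>1)"])
    show "f (u0 + A, v0 + B) = f (u0, v0) + A * fu (u0, v0) + B * fv (u0, v0)
       + (A^2 * fuu (\<xi>2, v0 + B) + 2 * A * B * fuv (u0, \<xi>3) + B^2 * fvv (u0, \<xi>1)) / 2"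
      using e1 e2 e3 by (simp add: algebra_simps power2_eq_square)
  qed (rule Pair_mem_cball_L1, use \<xi>1 \<xi>2 \<xi>3 in simp)+
qed

lemma local_max_partials_eq_0:
  fixes f fu fv :: "real \<times> real \<Rightarrow> real"
  assumes "open U" "(u0, v0) \<in> U"
    and max: "\<forall>q\<in>U. f q \<le> f (u0, v0)"
    and fu: "\<forall>p\<in>U. ((\<lambda>t. f (t, snd p)) has_real_derivative fu p) (at (fst p))"
    and fv: "\<forall>p\<in>U. ((\<lambda>t. f (fst p, t)) has_real_derivative fv p) (at (snd p))"
  shows "fu (u0, v0) = 0" "fv (u0, v0) = 0"
proof -
  obtain r where r: "r > 0" "cball (u0, v0) r \<subseteq> U"
    using assms(1,2) open_contains_cball by blast
  have near: "f (x, y) \<le> f (u0, v0)" if "\<bar>x - u0\<bar> + \<bar>y - v0\<bar> \<le> r" for x y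
    using Pair_mem_cball_L1[OF that] r max by blast
  show "fu (u0, v0) = 0"
    by (rule DERIV_local_max[OF _ r(1)]) (use fu assms(2) near in \<open>force+\<close>)
  show "fv (u0, v0) = 0"
    by (rule DERIV_local_max[OF _ r(1)]) (use fv assms(2) near in \<open>force+\<close>)
qed

lemma local_max_hessian_nonpos:
  fixes f fu fv fuu fuv fvv :: "real \<times> real \<Rightarrow> real"
  assumes U: "open U" "(u0, v0) \<in> U"
    and max: "\<forall>q\<in>U. f q \<le> f (u0, v0)"
    and fu: "\<forall>p\<in>U. ((\<lambda>t. f (t, snd p)) has_real_derivative fu p) (at (fst p))"
    and fv: "\<forall>p\<in>U. ((\<lambda>t. f (fst p, t)) has_real_derivative fv p) (at (snd p))"
    and fuu: "\<forall>p\<in>U. ((\<lambda>t. fu (t, snd p)) has_real_derivative fuu p) (at (fst p))"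
    and fuv: "\<forall>p\<in>U. ((\<lambda>t. fu (fst p, t)) has_real_derivative fuv p) (at (snd p))"
    and fvv: "\<forall>p\<in>U. ((\<lambda>t. fv (fst p, t)) has_real_derivative fvv p) (at (snd p))"
    and cont: "continuous_on U fuu" "continuous_on U fuv" "continuous_on U fvv"
  shows "a^2 * fuu (u0, v0) + 2 * a * b * fuv (u0, v0) + b^2 * fvv (u0, v0) \<le> 0"
proof (rule ccontr)
  define p0 where "p0 = (u0, v0)"
  \<comment> \<open>The expansion samples the second derivatives at three different points.\<close>
  define \<Phi> where "\<Phi> = (\<lambda>(q1, q2, q3). a^2 * fuu q1 + 2 * a * b * fuv q2 + b^2 * fvv q3)"
  assume "\<not> ?thesis"
  then have "\<Phi> (p0, p0, p0) > 0" by (simp add: \<Phi>_def p0_def)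
  moreover have "continuous_on (U \<times> U \<times> U) \<Phi>"
    unfolding \<Phi>_def split_def
    by (intro continuous_intros continuous_on_compose2[OF cont(1)] continuous_on_compose2[OF cont(2)]
        continuous_on_compose2[OF cont(3)]) auto
  ultimately have "open (\<Phi> -` {0<..} \<inter> U \<times> U \<times> U)" "(p0, p0, p0) \<in> \<Phi> -` {0<..} \<inter> U \<times> U \<times> U"
    using U continuous_on_open_vimage[of "U \<times> U \<times> U" \<Phi>] by (auto simp: p0_def open_Times)
  then obtain d where d: "d > 0" "ball (p0, p0, p0) d \<subseteq> \<Phi> -` {0<..}"
    by (meson open_contains_ball le_inf_iff)
  obtain r0 where r0: "r0 > 0" "ball p0 r0 \<subseteq> U" using U open_contains_ball p0_def by blast
  define r where "r = min (r0 / 2) (d / 4)"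
  have r: "r > 0" "cball p0 r \<subseteq> U" "3 * r < d"
    using r0 d by (auto simp: r_def)
  define t where "t = r / (\<bar>a\<bar> + \<bar>b\<bar> + 1)"
  have t: "t > 0" using r by (simp add: t_def add_pos_nonneg)
  have "\<bar>t * a\<bar> + \<bar>t * b\<bar> \<le> t * (\<bar>a\<bar> + \<bar>b\<bar> + 1)"
    using t by (simp add: abs_mult algebra_simps)
  also have "\<dots> = r" by (simp add: t_def add_pos_nonneg)
  finally have tab: "\<bar>t * a\<bar> + \<bar>t * b\<bar> \<le> r" .
  then have sub: "cball (u0, v0) (\<bar>t * a\<bar> + \<bar>t * b\<bar>) \<subseteq> U"
    using r by (auto simp: p0_def)
  obtain q1 q2 q3 where
    "q1 \<in> cball p0 (\<bar>t * a\<bar> + \<bar>t * b\<bar>)" "q2 \<in> cball p0 (\<bar>t * a\<bar> + \<bar>t * b\<bar>)"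
    "q3 \<in> cball p0 (\<bar>t * a\<bar> + \<bar>t * b\<bar>)"
    and expansion: "f (u0 + t * a, v0 + t * b) = f p0 + t * a * fu p0 + t * b * fv p0
       + ((t * a)^2 * fuu q1 + 2 * (t * a) * (t * b) * fuv q2 + (t * b)^2 * fvv q3) / 2"
    unfolding p0_def by (rule second_order_expansion_L_path[OF sub fu fv fuu fuv fvv])
  then have q: "dist p0 q1 \<le> r" "dist p0 q2 \<le> r" "dist p0 q3 \<le> r"
    using tab by auto
  have "dist (p0, p0, p0) (q1, q2, q3) \<le> dist p0 q1 + dist p0 q2 + dist p0 q3"
    using dist_Pair_le_add[of p0 "(p0, p0)" q1 "(q2, q3)"] dist_Pair_le_add[of p0 p0 q2 q3] by simp
  also have "\<dots> < d" using q r(3) by simp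
  finally have "\<Phi> (q1, q2, q3) > 0" using d(2) by auto
  have "fu p0 = 0" "fv p0 = 0"
    using local_max_partials_eq_0[OF U max fu fv] by (simp_all add: p0_def)
  then have "f (u0 + t * a, v0 + t * b) - f p0 = t^2 / 2 * \<Phi> (q1, q2, q3)"
    using expansion by (simp add: \<Phi>_def power_mult_distrib ring_distribs power2_eq_square)
  with \<open>\<Phi> (q1, q2, q3) > 0\<close> have "f (u0 + t * a, v0 + t * b) > f p0"
    using t by (metis diff_gt_0_iff_gt divide_pos_pos mult_pos_pos zero_less_numeral zero_less_power)
  moreover have "(u0 + t * a, v0 + t * b) \<in> U"
    using sub Pair_mem_cball_L1[of "u0 + t * a" u0 "v0 + t * b" v0] by auto
  ultimately show False using max by (fastforce simp: p0_def)
qed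

lemma cz_add_chr [simp]: "cz (V + chr P A B) = cz V"
  by (simp add: cz_def chr_def)

lemma pt_lincomb_eq_0_iff:
  "a *\<^sub>R V + b *\<^sub>R W = (0::pt) \<longleftrightarrow>
    a * cx V + b * cx W = 0 \<and> a * cy V + b * cy W = 0 \<and> a * cz V + b * cz W = 0"
  by (cases V; cases W) (auto simp: cx_def cy_def cz_def zero_prod_def)

lemma hmetric_vertical:
  assumes "cx N = 0" "cy N = 0"
  shows "hmetric P V N = cz V * cz N"
  using assms by (simp add: hmetric_def)

lemma hmetric_horizontal_gram_det:
  assumes "cz V = 0" "cz W = 0"
  shows "hmetric P V V * hmetric P W W - (hmetric P V W)^2 = ((cx V * cy W - cy V * cx W) / (cy P)^2)^2"
proof (cases "cy P = 0")
  case False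
  with assms show ?thesis by (simp add: hmetric_def field_simps) (simp add: algebra_simps power2_eq_square)
qed (use assms in \<open>simp add: hmetric_def\<close>)

lemma hmetric_self_pos:
  assumes "cy P \<noteq> 0" "cx V \<noteq> 0 \<or> cy V \<noteq> 0"
  shows "hmetric P V V > 0"
proof -
  have "cx V * cx V + cy V * cy V > 0"
    using assms(2) by (metis power2_eq_square sum_power2_gt_zero_iff)
  then have "(cx V * cx V + cy V * cy V) / (cy P)^2 > 0" using assms(1) by simp
  then show ?thesis unfolding hmetric_def by (smt (verit) zero_le_square)
qed

lemma immersive_horizontal_jacobian_ne_0:
  assumes "immersive_at X p" "cz (pdu X p) = 0" "cz (pdv X p) = 0"
  shows "cx (pdu X p) * cy (pdv X p) - cy (pdu X p) * cx (pdv X p) \<noteq> 0"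
proof
  define x1 where "x1 = cx (pdu X p)"
  define y1 where "y1 = cy (pdu X p)"
  define x2 where "x2 = cx (pdv X p)"
  define y2 where "y2 = cy (pdv X p)"
  assume "cx (pdu X p) * cy (pdv X p) - cy (pdu X p) * cx (pdv X p) = 0"
  then have det: "x1 * y2 = y1 * x2" by (simp add: x1_def y1_def x2_def y2_def)
  have indep: "a = 0 \<and> b = 0" if "a * x1 + b * x2 = 0" "a * y1 + b * y2 = 0" for a b
  proof -
    have "a *\<^sub>R pdu X p + b *\<^sub>R pdv X p = 0"
      unfolding pt_lincomb_eq_0_iff using that assms(2,3) by (simp add: x1_def y1_def x2_def y2_def)
    then show ?thesis using assms(1) unfolding immersive_at_def by blast
  qed
  have "y2 * x1 + (- y1) * x2 = 0" "y2 * y1 + (- y1) * y2 = 0"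
    using det by (simp_all add: algebra_simps)
  then have "y1 = 0" "y2 = 0" using indep[of y2 "- y1"] by simp_all
  moreover have "x2 * x1 + (- x1) * x2 = 0" "x2 * y1 + (- x1) * y2 = 0"
    using det by (simp_all add: algebra_simps)
  then have "x1 = 0" "x2 = 0" using indep[of x2 "- x1"] by simp_all
  ultimately show False using indep[of 1 0] by simp
qed

lemma unit_normal_to_horizontal_plane:
  assumes "cy P \<noteq> 0" "cz V = 0" "cz W = 0" "cx V * cy W - cy V * cx W \<noteq> 0"
    and "hmetric P N V = 0" "hmetric P N W = 0" "hmetric P N N = 1"
  shows "cx N = 0" "cy N = 0" "(cz N)^2 = 1"
proof -
  have o1: "cx N * cx V + cy N * cy V = 0" and o2: "cx N * cx W + cy N * cy W = 0"
    using assms(1,2,3,5,6) by (simp_all add: hmetric_def)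
  have "cx N * (cx V * cy W - cy V * cx W) = cy W * (cx N * cx V + cy N * cy V) - cy V * (cx N * cx W + cy N * cy W)"
    by (simp add: algebra_simps)
  then show cx: "cx N = 0" using o1 o2 assms(4) by simp
  have "cy N * (cx V * cy W - cy V * cx W) = cx V * (cx N * cx W + cy N * cy W) - cx W * (cx N * cx V + cy N * cy V)"
    by (simp add: algebra_simps)
  then show cy: "cy N = 0" using o1 o2 assms(4) by simp
  show "(cz N)^2 = 1" using assms(7) cx cy by (simp add: hmetric_def power2_eq_square)
qed

lemma adjugate_trace_nonpos:
  fixes g11 g12 g22 A11 A12 A22 :: real
  assumes "g11 > 0" "g11 * g22 - g12^2 \<ge> 0"
    and "\<forall>a b. a^2 * A11 + 2 * a * b * A12 + b^2 * A22 \<le> 0"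
  shows "g22 * A11 - 2 * g12 * A12 + g11 * A22 \<le> 0"
proof -
  have "g11 * (g22 * A11 - 2 * g12 * A12 + g11 * A22)
      = ((- g12)^2 * A11 + 2 * (- g12) * g11 * A12 + g11^2 * A22) + (g11 * g22 - g12^2) * A11"
    by (simp add: algebra_simps power2_eq_square)
  also have "\<dots> \<le> 0"
  proof (rule add_nonpos_nonpos)
    show "(- g12)^2 * A11 + 2 * (- g12) * g11 * A12 + g11^2 * A22 \<le> 0"
      using assms(3) by blast
    have "A11 \<le> 0" using spec[OF spec[OF assms(3), of 1], of 0] by simp
    then show "(g11 * g22 - g12^2) * A11 \<le> 0" by (rule mult_nonneg_nonpos[OF assms(2)])
  qed
  finally show ?thesis using assms(1) by (simp add: mult_le_0_iff)
qed

lemma translator_height_critical_point_not_max: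
  assumes imm: "immersive_at X p" and normal: "unit_normal_at X N p"
    and soliton: "mean_curv X N p = hmetric (X p) (N p) (0, 0, 1)"
    and "cy (X p) > 0"
    and crit: "cz (pdu X p) = 0" "cz (pdv X p) = 0"
    and hess: "\<forall>a b. a^2 * cz (pdu (pdu X) p) + 2 * a * b * cz (pdv (pdu X) p)
                 + b^2 * cz (pdv (pdv X) p) \<le> 0"
  shows False
proof -
  define P where "P = X p"
  define g11 where "g11 = hmetric P (pdu X p) (pdu X p)"
  define g12 where "g12 = hmetric P (pdu X p) (pdv X p)"
  define g22 where "g22 = hmetric P (pdv X p) (pdv X p)"
  define T where "T = g22 * cz (pdu (pdu X) p) - 2 * g12 * cz (pdv (pdu X) p) + g11 * cz (pdv (pdv X) p)"
  have "cy P \<noteq> 0" using assms(4) by (simp add: P_def)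
  have jac: "cx (pdu X p) * cy (pdv X p) - cy (pdu X p) * cx (pdv X p) \<noteq> 0"
    using immersive_horizontal_jacobian_ne_0[OF imm crit] .
  have N: "cx (N p) = 0" "cy (N p) = 0" "(cz (N p))^2 = 1"
    using unit_normal_to_horizontal_plane[OF \<open>cy P \<noteq> 0\<close> crit jac] normal
    by (auto simp: unit_normal_at_def P_def)
  have det: "g11 * g22 - g12^2 > 0"
    using hmetric_horizontal_gram_det[OF crit, of P] jac \<open>cy P \<noteq> 0\<close> by (simp add: g11_def g12_def g22_def)
  have "g11 > 0"
    unfolding g11_def using jac by (intro hmetric_self_pos[OF \<open>cy P \<noteq> 0\<close>]) auto
  then have "T \<le> 0"
    unfolding T_def using det hess by (intro adjugate_trace_nonpos) auto
  have "mean_curv X N p = cz (N p) * T / (2 * (g11 * g22 - g12^2))"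
    unfolding mean_curv_def Let_def T_def g11_def g12_def g22_def P_def
    by (simp add: hmetric_vertical[OF N(1,2)] algebra_simps)
  moreover have "hmetric (X p) (N p) (0, 0, 1) = cz (N p)"
    using N by (simp add: hmetric_def cx_def cy_def cz_def)
  moreover have "cz (N p) \<noteq> 0" using N(3) by auto
  ultimately have "cz (N p) * T = cz (N p) * (2 * (g11 * g22 - g12^2))"
    using soliton det by (simp add: field_simps)
  then have "T = 2 * (g11 * g22 - g12^2)" using \<open>cz (N p) \<noteq> 0\<close> by simp
  with \<open>T \<le> 0\<close> det show False by simp
qed

lemma has_real_derivative_cz:
  assumes "(g has_vector_derivative v) (at x)"
  shows "((\<lambda>t. cz (g t)) has_real_derivative cz v) (at x)"
proof -
  have "((\<lambda>t. snd (snd (g t))) has_derivative (\<lambda>h. h * snd (snd v))) (at x)"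
    using has_derivative_snd[OF has_derivative_snd[OF assms[unfolded has_vector_derivative_def]]]
    by simp
  moreover have "(\<lambda>h. h * snd (snd v)) = (*) (snd (snd v))" by (auto simp: fun_eq_iff)
  ultimately show ?thesis
    unfolding cz_def has_field_derivative_def by simp
qed

lemma continuous_on_cz: "continuous_on S cz"
  unfolding cz_def by (intro continuous_intros)

lemma C1_on_cz_partials:
  assumes "C1_on U X"
  shows "\<forall>p\<in>U. ((\<lambda>t. cz (X (t, snd p))) has_real_derivative cz (pdu X p)) (at (fst p))"
    "\<forall>p\<in>U. ((\<lambda>t. cz (X (fst p, t))) has_real_derivative cz (pdv X p)) (at (snd p))"
    "continuous_on U (\<lambda>p. cz (pdu X p))" "continuous_on U (\<lambda>p. cz (pdv X p))"
  using assms unfolding C1_on_def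
  by (auto intro: has_real_derivative_cz continuous_on_compose2[OF continuous_on_cz])

lemma translator_chart_height_not_max:
  assumes "open U" "p0 \<in> U" "C2_on U X" and max: "\<forall>p\<in>U. cz (X p) \<le> cz (X p0)"
    and "immersive_at X p0" "unit_normal_at X N p0"
    and "mean_curv X N p0 = hmetric (X p0) (N p0) (0, 0, 1)" "cy (X p0) > 0"
  shows False
proof -
  obtain u0 v0 where p0: "p0 = (u0, v0)" by (cases p0)
  have C1: "C1_on U X" "C1_on U (pdu X)" "C1_on U (pdv X)"
    using assms(3) by (simp_all add: C2_on_def)
  note X = C1_on_cz_partials[OF C1(1)] and Xu = C1_on_cz_partials[OF C1(2)]
    and Xv = C1_on_cz_partials[OF C1(3)]
  have "cz (pdu X p0) = 0" "cz (pdv X p0) = 0"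
    using local_max_partials_eq_0[OF assms(1) _ _ X(1,2)] assms(2) max by (simp_all add: p0)
  moreover have "\<forall>a b. a^2 * cz (pdu (pdu X) p0) + 2 * a * b * cz (pdv (pdu X) p0)
                   + b^2 * cz (pdv (pdv X) p0) \<le> 0"
    using local_max_hessian_nonpos[OF assms(1) _ _ X(1,2) Xu(1,2) Xv(2) Xu(3,4) Xv(4)]
      assms(2) max by (simp add: p0)
  ultimately show False
    using translator_height_critical_point_not_max assms(5-8) by blast
qed

theorem proposition5p5:
  shows "\<not> (\<exists>(M :: 'a topology) F eta. closed_translating_soliton M F eta)"
proof
  assume "\<exists>(M :: 'a topology) F eta. closed_translating_soliton M F eta"
  then obtain M :: "'a topology" and F eta where "closed_translating_soliton M F eta" by blast
  note S = this[unfolded closed_translating_soliton_def]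
  have "compact (F ` topspace M)"
    using image_compactin[of M "topspace M" euclidean F] S by (simp add: compact_space_def)
  then obtain q0 where q0: "q0 \<in> topspace M" and max: "\<forall>q\<in>topspace M. cz (F q) \<le> cz (F q0)"
    using continuous_attains_sup[OF _ _ continuous_on_cz, of "F ` topspace M"] S by auto
  obtain U and phi :: "real \<times> real \<Rightarrow> 'a" where U: "open U" "q0 \<in> phi ` U" "openin M (phi ` U)"
    and C2: "C2_on U (F \<circ> phi)"
    and chart: "\<forall>p\<in>U. immersive_at (F \<circ> phi) p \<and> unit_normal_at (F \<circ> phi) (eta \<circ> phi) p \<and>
        mean_curv (F \<circ> phi) (eta \<circ> phi) p = hmetric (F (phi p)) (eta (phi p)) (0, 0, 1)"
    using S q0 by blast
  then obtain p0 where p0: "p0 \<in> U" "phi p0 = q0" by blast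
  have "phi ` U \<subseteq> topspace M" using openin_subset[OF U(3)] .
  then have "\<forall>p\<in>U. cz ((F \<circ> phi) p) \<le> cz ((F \<circ> phi) p0)" using max p0 by auto
  moreover have "cy ((F \<circ> phi) p0) > 0" using S q0 p0 by (simp add: in_H2R_def)
  ultimately show False
    using translator_chart_height_not_max[OF U(1) p0(1) C2, where N = "eta \<circ> phi"] chart p0(1) by simp
qed

end
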